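(* Let $f=\sum_{|\alpha|=d}c_\alpha x^\alpha\in\mathbb{R}[x_1,\dots,x_n]$ be a form of degree $d\ge1$ with $c_\alpha>0$ for all $\alpha\in\mathbb{Z}_{\ge0}^n$ with $|\alpha|=d$. Let $A=\{p/f^r: r\ge0,\ p\in\mathbb{R}[x_1,\dots,x_n] \text{ homogeneous of degree } dr \text{ (or zero)}\}\subset\mathbb{R}(x_1,\dots,x_n)$, and let $T\subset A$ be the subsemiring generated by $\mathbb{R}_{\ge0}$ and the elements $y_\alpha=x^\alpha/f$ ($|\alpha|=d$). Then $T$ is archimedean, i.e. for every $a\in A$ there is $N\in\mathbb{Z}$ with $N+a\in T$.
   Context: A semiring is a subset containing $0,1$ and closed under addition and multiplication. $T$ consists exactly of the fractions $p/f^r$ with $r\ge0$ and $p$ homogeneous of degree $dr$ with all coefficients nonnegative. *)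

theory Defs
  imports Complex_Main "HOL-Library.Poly_Mapping" "HOL-Computational_Algebra.Fraction_Field"
begin

text \<open>Multivariate real polynomials: finitely supported maps from exponent vectors
  (finitely supported maps nat to nat, variable i has exponent Poly_Mapping.lookup alpha i) to real coefficients.\<close>

type_synonym mpoly = "(nat \<Rightarrow>\<^sub>0 nat) \<Rightarrow>\<^sub>0 real"
type_synonym ratfun = "mpoly fract"

definition mdeg :: "(nat \<Rightarrow>\<^sub>0 nat) \<Rightarrow> nat" where
  "mdeg alpha = (\<Sum>i\<in>Poly_Mapping.keys alpha. Poly_Mapping.lookup alpha i)"

definition exps_in :: "nat \<Rightarrow> (nat \<Rightarrow>\<^sub>0 nat) \<Rightarrow> bool" where
  "exps_in n alpha \<longleftrightarrow> Poly_Mapping.keys alpha \<subseteq> {..<n}"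

definition poly_in :: "nat \<Rightarrow> mpoly \<Rightarrow> bool" where
  "poly_in n p \<longleftrightarrow> (\<forall>alpha\<in>Poly_Mapping.keys p. exps_in n alpha)"

definition homogeneous :: "nat \<Rightarrow> mpoly \<Rightarrow> bool" where
  "homogeneous k p \<longleftrightarrow> (\<forall>alpha\<in>Poly_Mapping.keys p. mdeg alpha = k)"

definition monom :: "(nat \<Rightarrow>\<^sub>0 nat) \<Rightarrow> mpoly" where
  "monom alpha = Poly_Mapping.single alpha 1"

definition const_poly :: "real \<Rightarrow> mpoly" where
  "const_poly c = Poly_Mapping.single 0 c"

definition to_rf :: "mpoly \<Rightarrow> ratfun" where
  "to_rf p = Fract p 1"

definition ringA :: "nat \<Rightarrow> nat \<Rightarrow> mpoly \<Rightarrow> ratfun set" where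
  "ringA n d f = {to_rf p / to_rf f ^ r | p r. poly_in n p \<and> homogeneous (d * r) p}"

inductive_set semT :: "nat \<Rightarrow> nat \<Rightarrow> mpoly \<Rightarrow> ratfun set" for n d f where
  const: "c \<ge> 0 \<Longrightarrow> to_rf (const_poly c) \<in> semT n d f"
| gen: "exps_in n alpha \<Longrightarrow> mdeg alpha = d \<Longrightarrow> to_rf (monom alpha) / to_rf f \<in> semT n d f"
| add: "a \<in> semT n d f \<Longrightarrow> b \<in> semT n d f \<Longrightarrow> a + b \<in> semT n d f"
| mult: "a \<in> semT n d f \<Longrightarrow> b \<in> semT n d f \<Longrightarrow> a * b \<in> semT n d f"

end

theory Submission imports Defs begin

text \<open>Every element of \<open>A\<close> is a real linear combination of the monomial quotients
  \<open>x\<^sup>\<alpha>/f\<^sup>r\<close> with \<open>|\<alpha>| = d r\<close>, so it suffices that these lie in \<open>T\<close> and are bounded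
  there, i.e. \<open>K - x\<^sup>\<alpha>/f\<^sup>r \<in> T\<close> for some real \<open>K\<close>. Such quotients are products of
  generators \<open>y\<^sub>\<beta>\<close>, and bounded elements of \<open>T\<close> are closed under products. Finally each
  generator is bounded: \<open>1 = \<Sum>\<^sub>\<gamma> c\<^sub>\<gamma> y\<^sub>\<gamma>\<close> with all \<open>c\<^sub>\<gamma> > 0\<close>, hence
  \<open>1/c\<^sub>\<beta> - y\<^sub>\<beta> = (1/c\<^sub>\<beta>) \<Sum>\<^sub>\<gamma>\<^sub>\<noteq>\<^sub>\<beta> c\<^sub>\<gamma> y\<^sub>\<gamma> \<in> T\<close>.\<close>

lemma to_rf_add: "to_rf (p + q) = to_rf p + to_rf q"
  by (simp add: to_rf_def)

lemma to_rf_mult: "to_rf (p * q) = to_rf p * to_rf q"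
  by (simp add: to_rf_def)

lemma to_rf_0: "to_rf 0 = 0"
  by (simp add: to_rf_def Zero_fract_def)

lemma to_rf_1: "to_rf 1 = 1"
  by (simp add: to_rf_def One_fract_def)

lemma to_rf_sum: "to_rf (sum g S) = (\<Sum>x\<in>S. to_rf (g x))"
  by (induction S rule: infinite_finite_induct) (auto simp: to_rf_0 to_rf_add)

lemma to_rf_eq_0_iff: "to_rf p = 0 \<longleftrightarrow> p = 0"
  by (simp add: to_rf_def Zero_fract_def eq_fract)

abbreviation const_rf :: "real \<Rightarrow> ratfun" where
  "const_rf c \<equiv> to_rf (const_poly c)"

lemma const_rf_add: "const_rf (a + b) = const_rf a + const_rf b"
  by (simp add: const_poly_def single_add to_rf_add)

lemma const_rf_mult: "const_rf (a * b) = const_rf a * const_rf b"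
  by (simp add: const_poly_def mult_single to_rf_mult[symmetric])

lemma const_rf_0: "const_rf 0 = 0"
  by (simp add: const_poly_def to_rf_0)

lemma const_rf_1: "const_rf 1 = 1"
  by (simp add: const_poly_def to_rf_1)

lemma const_rf_diff: "const_rf (a - b) = const_rf a - const_rf b"
  using const_rf_add[of "a - b" b] by simp

lemma of_nat_eq_const_rf: "(of_nat k :: ratfun) = const_rf (real k)"
  by (simp add: to_rf_def const_poly_def of_nat_fract)

lemma monom_add: "monom (a + b) = monom a * monom b"
  by (simp add: monom_def mult_single)

lemma to_rf_eq_sum_monoms:
  "to_rf p = (\<Sum>g\<in>Poly_Mapping.keys p. const_rf (Poly_Mapping.lookup p g) * to_rf (monom g))"
proof -
  have "p = (\<Sum>g\<in>Poly_Mapping.keys p. Poly_Mapping.single g (Poly_Mapping.lookup p g))"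
    by (rule poly_mapping_eqI) (simp add: lookup_sum lookup_single when_def in_keys_iff
        sum.delta[OF finite_keys] cong: if_cong)
  moreover have "Poly_Mapping.single g c = const_poly c * monom g" for g c
    by (simp add: const_poly_def monom_def mult_single)
  ultimately show ?thesis
    by (metis (no_types, lifting) sum.cong to_rf_mult to_rf_sum)
qed

lemma mdeg_eq_sum: "finite S \<Longrightarrow> Poly_Mapping.keys a \<subseteq> S \<Longrightarrow> mdeg a = (\<Sum>i\<in>S. Poly_Mapping.lookup a i)"
  unfolding mdeg_def by (rule sum.mono_neutral_left) (auto simp: in_keys_iff)

lemma keys_add_nat: "Poly_Mapping.keys ((a::nat \<Rightarrow>\<^sub>0 nat) + b) = Poly_Mapping.keys a \<union> Poly_Mapping.keys b"
  by (auto simp: in_keys_iff lookup_add)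

lemma mdeg_add: "mdeg (a + b) = mdeg a + mdeg b"
proof -
  let ?S = "Poly_Mapping.keys a \<union> Poly_Mapping.keys b"
  have "mdeg (a + b) = (\<Sum>i\<in>?S. Poly_Mapping.lookup (a + b) i)"
    by (rule mdeg_eq_sum) (auto simp: keys_add_nat)
  also have "\<dots> = (\<Sum>i\<in>?S. Poly_Mapping.lookup a i) + (\<Sum>i\<in>?S. Poly_Mapping.lookup b i)"
    by (simp add: lookup_add sum.distrib)
  also have "\<dots> = mdeg a + mdeg b"
    by (simp add: mdeg_eq_sum[symmetric])
  finally show ?thesis .
qed

lemma mdeg_single: "mdeg (Poly_Mapping.single i k) = k"
  by (cases "k = 0") (auto simp: mdeg_def)

lemma mdeg_eq_0_iff: "mdeg a = 0 \<longleftrightarrow> a = 0"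
  by (auto simp: mdeg_def in_keys_iff poly_mapping_eqI)

lemma mdeg_split:
  assumes "mdeg a = k + m"
  obtains b c where "a = b + c" "mdeg b = k" "mdeg c = m"
  using assms
proof (induction k arbitrary: a thesis)
  case 0
  then show ?case by (metis add_0 mdeg_eq_0_iff)
next
  case (Suc k)
  then have "a \<noteq> 0" using mdeg_eq_0_iff[of a] by simp
  then obtain i where i: "Poly_Mapping.lookup a i \<noteq> 0"
    by (metis keys_eq_empty all_not_in_conv in_keys_iff)
  define a' where "a' = a - Poly_Mapping.single i 1"
  have a: "a = a' + Poly_Mapping.single i 1"
    using i by (intro poly_mapping_eqI) (auto simp: a'_def lookup_add lookup_minus lookup_single when_def)
  then have "mdeg a' = k + m" using Suc.prems by (simp add: mdeg_add mdeg_single)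
  then obtain b c where "a' = b + c" "mdeg b = k" "mdeg c = m" using Suc.IH by blast
  then show ?case
    using Suc.prems(1)[of "b + Poly_Mapping.single i 1" c] by (simp add: a mdeg_add mdeg_single ac_simps)
qed

lemma exps_in_add: "exps_in n (a + b) \<longleftrightarrow> exps_in n a \<and> exps_in n b"
  by (auto simp: exps_in_def keys_add_nat)

lemma semT_0: "0 \<in> semT n d f"
  using semT.const[of 0 n d f] by (simp add: const_rf_0)

lemma semT_sum: "(\<And>x. x \<in> S \<Longrightarrow> g x \<in> semT n d f) \<Longrightarrow> sum g S \<in> semT n d f"
  by (induction S rule: infinite_finite_induct) (auto intro: semT_0 semT.add)

lemma semT_scale: "c \<ge> 0 \<Longrightarrow> a \<in> semT n d f \<Longrightarrow> const_rf c * a \<in> semT n d f"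
  by (intro semT.mult semT.const)

definition semT_bounded :: "nat \<Rightarrow> nat \<Rightarrow> mpoly \<Rightarrow> ratfun \<Rightarrow> bool" where
  "semT_bounded n d f a \<longleftrightarrow> a \<in> semT n d f \<and> (\<exists>K\<ge>0. const_rf K - a \<in> semT n d f)"

lemma semT_bounded_1: "semT_bounded n d f 1"
  unfolding semT_bounded_def
  using semT.const[of 1 n d f] semT_0 by (auto simp: const_rf_1 intro!: exI[of _ 1])

lemma semT_bounded_mult:
  assumes "semT_bounded n d f a" "semT_bounded n d f b"
  shows "semT_bounded n d f (a * b)"
proof -
  obtain K L where a: "a \<in> semT n d f" "K \<ge> 0" "const_rf K - a \<in> semT n d f"
    and b: "b \<in> semT n d f" "L \<ge> 0" "const_rf L - b \<in> semT n d f"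
    using assms by (auto simp: semT_bounded_def)
  have "const_rf (K * L) - a * b = const_rf K * (const_rf L - b) + (const_rf K - a) * b"
    by (simp add: const_rf_mult algebra_simps)
  also have "\<dots> \<in> semT n d f"
    using a b by (intro semT.add semT.mult semT_scale)
  moreover have "K * L \<ge> 0" using a b by simp
  ultimately show ?thesis
    using a b by (auto simp: semT_bounded_def intro: semT.mult intro!: exI[of _ "K * L"])
qed

lemma semT_bounded_gen:
  assumes "poly_in n f" "homogeneous d f"
    and pos: "\<And>alpha. exps_in n alpha \<Longrightarrow> mdeg alpha = d \<Longrightarrow> Poly_Mapping.lookup f alpha > 0"
    and b: "exps_in n b" "mdeg b = d"
  shows "semT_bounded n d f (to_rf (monom b) / to_rf f)"
proof -
  let ?c = "Poly_Mapping.lookup f"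
  let ?y = "\<lambda>g. to_rf (monom g) / to_rf f"
  have cb: "?c b > 0" using pos b by auto
  then have b_key: "b \<in> Poly_Mapping.keys f" by (simp add: in_keys_iff)
  then have "to_rf f \<noteq> 0" by (auto simp: to_rf_eq_0_iff)
  then have "1 = to_rf f / to_rf f" by simp
  also have "\<dots> = (\<Sum>g\<in>Poly_Mapping.keys f. const_rf (?c g) * ?y g)"
    by (subst (1) to_rf_eq_sum_monoms) (simp add: sum_divide_distrib)
  also have "\<dots> = const_rf (?c b) * ?y b + (\<Sum>g\<in>Poly_Mapping.keys f - {b}. const_rf (?c g) * ?y g)"
    using b_key by (simp add: sum.remove)
  finally have rest: "1 - const_rf (?c b) * ?y b = (\<Sum>g\<in>Poly_Mapping.keys f - {b}. const_rf (?c g) * ?y g)"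
    by (simp add: algebra_simps)
  have "const_rf (1 / ?c b) - ?y b = const_rf (1 / ?c b) * (1 - const_rf (?c b) * ?y b)"
    using cb by (simp add: right_diff_distrib const_rf_1 flip: const_rf_mult mult.assoc)
  also have "\<dots> \<in> semT n d f"
  proof (rule semT_scale)
    show "(1 - const_rf (?c b) * ?y b) \<in> semT n d f"
      unfolding rest
    proof (rule semT_sum)
      fix g assume "g \<in> Poly_Mapping.keys f - {b}"
      then have g: "exps_in n g" "mdeg g = d" using assms(1,2) by (auto simp: poly_in_def homogeneous_def)
      then show "const_rf (?c g) * ?y g \<in> semT n d f"
        using pos[OF g] by (intro semT_scale semT.gen) auto
    qed
  qed (use cb in simp)
  finally show ?thesis
    using b cb by (auto simp: semT_bounded_def intro: semT.gen intro!: exI[of _ "1 / ?c b"])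
qed

lemma semT_bounded_monom_quotient:
  assumes "poly_in n f" "homogeneous d f"
    and pos: "\<And>alpha. exps_in n alpha \<Longrightarrow> mdeg alpha = d \<Longrightarrow> Poly_Mapping.lookup f alpha > 0"
  shows "exps_in n a \<Longrightarrow> mdeg a = d * r \<Longrightarrow> semT_bounded n d f (to_rf (monom a) / to_rf f ^ r)"
proof (induction r arbitrary: a)
  case 0
  then show ?case
    using semT_bounded_1 by (simp add: mdeg_eq_0_iff monom_def to_rf_1 flip: one_poly_mapping.abs_eq)
next
  case (Suc r)
  then obtain b c where a: "a = b + c" and deg: "mdeg b = d" "mdeg c = d * r"
    using mdeg_split[of a d "d * r"] by auto
  then have exps: "exps_in n b" "exps_in n c" using Suc.prems exps_in_add by auto
  have split: "to_rf (monom a) / to_rf f ^ Suc r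
      = (to_rf (monom b) / to_rf f) * (to_rf (monom c) / to_rf f ^ r)"
    by (simp add: a monom_add to_rf_mult)
  show ?case
    unfolding split
    by (rule semT_bounded_mult[OF semT_bounded_gen[OF assms exps(1) deg(1)] Suc.IH[OF exps(2) deg(2)]])
qed

definition semT_shiftable :: "nat \<Rightarrow> nat \<Rightarrow> mpoly \<Rightarrow> ratfun \<Rightarrow> bool" where
  "semT_shiftable n d f a \<longleftrightarrow> (\<exists>R\<ge>0. const_rf R + a \<in> semT n d f)"

lemma semT_shiftable_sum:
  "(\<And>x. x \<in> S \<Longrightarrow> semT_shiftable n d f (g x)) \<Longrightarrow> semT_shiftable n d f (sum g S)"
proof (induction S rule: infinite_finite_induct)
  case (insert x S)
  then have "semT_shiftable n d f (g x)" "semT_shiftable n d f (sum g S)"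
    by auto
  then obtain R Q where "R \<ge> 0" "const_rf R + g x \<in> semT n d f"
    and "Q \<ge> 0" "const_rf Q + sum g S \<in> semT n d f"
    by (auto simp: semT_shiftable_def)
  then show ?case
    using semT.add[of "const_rf R + g x" n d f "const_rf Q + sum g S"] insert.hyps
    by (auto simp: semT_shiftable_def const_rf_add algebra_simps intro!: exI[of _ "R + Q"])
qed (auto simp: semT_shiftable_def semT_0 const_rf_0 intro: exI[of _ 0])

lemma semT_shiftable_scaled_bounded:
  assumes "semT_bounded n d f m"
  shows "semT_shiftable n d f (const_rf c * m)"
proof (cases "c \<ge> 0")
  case True
  then show ?thesis
    using assms semT_scale by (auto simp: semT_bounded_def semT_shiftable_def const_rf_0 intro!: exI[of _ 0])
next
  case False
  obtain K where K: "m \<in> semT n d f" "K \<ge> 0" "const_rf K - m \<in> semT n d f"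
    using assms by (auto simp: semT_bounded_def)
  have "const_rf (- c * K) + const_rf c * m = const_rf (- c) * (const_rf K - m)"
    by (simp add: const_rf_mult const_rf_diff[of 0, simplified] const_rf_0 algebra_simps)
  also have "\<dots> \<in> semT n d f"
    using False K by (intro semT_scale) auto
  finally show ?thesis
    using False K(2) unfolding semT_shiftable_def
    by (intro exI[of _ "- c * K"]) (auto simp: mult_nonpos_nonneg)
qed

theorem mainTheorem6:
  fixes n d :: nat and f :: mpoly
  assumes "n \<ge> 1" and "d \<ge> 1"
    and "poly_in n f" and "homogeneous d f"
    and "\<And>alpha. exps_in n alpha \<Longrightarrow> mdeg alpha = d \<Longrightarrow> Poly_Mapping.lookup f alpha > 0"
  shows "\<forall>a\<in>ringA n d f. \<exists>N::int. of_int N + a \<in> semT n d f"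
proof
  fix a assume "a \<in> ringA n d f"
  then obtain p r where a: "a = to_rf p / to_rf f ^ r" and p: "poly_in n p" "homogeneous (d * r) p"
    unfolding ringA_def by auto
  have a_sum: "a = (\<Sum>g\<in>Poly_Mapping.keys p. const_rf (Poly_Mapping.lookup p g) * (to_rf (monom g) / to_rf f ^ r))"
    unfolding a by (subst to_rf_eq_sum_monoms) (simp add: sum_divide_distrib)
  have "semT_shiftable n d f a"
    unfolding a_sum using p by (intro semT_shiftable_sum semT_shiftable_scaled_bounded
        semT_bounded_monom_quotient[OF assms(3-5)]) (auto simp: poly_in_def homogeneous_def)
  then obtain R where R: "R \<ge> 0" "const_rf R + a \<in> semT n d f"
    by (auto simp: semT_shiftable_def)
  define N where "N = nat \<lceil>R\<rceil>"
  have "of_int (int N) + a = const_rf (real N - R) + (const_rf R + a)"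
    by (simp add: of_nat_eq_const_rf const_rf_diff)
  also have "\<dots> \<in> semT n d f"
    by (rule semT.add[OF semT.const R(2)]) (simp add: N_def, linarith)
  finally show "\<exists>N::int. of_int N + a \<in> semT n d f" by blast
qed

end
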